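(* Let ${\bf r}=(r_0,r_1,r_2,\dots)$ be a sequence of nonnegative integers with only finitely many nonzero entries, put $n=\sum_{d\ge1}r_d$ and $\ell=-\sum_{d\ge0}(d-1)r_d$, and assume $\ell\ge1$ (so $r_0\ge1$). Then, as polynomials in $x$, $$\mathcal H_{\bf r}(x):=\sum_{F\in\mathscr F({\bf r})}\prod_{v\in I(F)}\frac{((d_v-1)h_v+1)x+1-h_v}{d_vh_v}=\frac{\ell}{r_0}\binom{r_0x}{r_0x-n,\,r_1,\,r_2,\dots},$$ where the right-hand side means the polynomial $\frac{\ell}{r_0}\cdot\frac{(r_0x)(r_0x-1)\cdots(r_0x-n+1)}{r_1!\,r_2!\cdots}$.
   Context: A plane tree is an unlabelled rooted tree in which the children of every vertex are linearly ordered. A plane forest is a finite linearly ordered sequence of plane trees. For vertices $u,v$ in a tree, $v$ is a descendant of $u$ if $u$ lies on the path from the root to $v$ (so $u$ is a descendant of itself). The degree $d_v$ of a vertex $v$ is its number of children; $v$ is internal if $d_v\ge1$, otherwise a leaf. $I(F)$ denotes the set of internal vertices of a forest $F$. The hook length $h_v$ of an internal vertex $v$ is the number of internal vertices among the descendants of $v$ (including $v$ itself). A plane forest is of type ${\bf r}=(r_0,r_1,\dots)$ if it has exactly $r_i$ vertices of degree $i$ for each $i\ge0$; $\mathscr F({\bf r})$ is the set of plane forests of type ${\bf r}$. For such forests $n=\sum_{d\ge1}r_d=|I(F)|$ and $\ell=-\sum_{d\ge0}(d-1)r_d$ is the number of trees. *)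

theory Defs
  imports "HOL-Computational_Algebra.Polynomial"
begin

datatype ptree = Node "ptree list"

fun degs :: "ptree \<Rightarrow> nat list" where
  "degs (Node ts) = length ts # concat (map degs ts)"

definition forest_degs :: "ptree list \<Rightarrow> nat list" where
  "forest_degs F = concat (map degs F)"

definition num_deg :: "ptree list \<Rightarrow> nat \<Rightarrow> nat" where
  "num_deg F i = length (filter (\<lambda>d. d = i) (forest_degs F))"

definition forests_of_type :: "(nat \<Rightarrow> nat) \<Rightarrow> ptree list set" where
  "forests_of_type r = {F. \<forall>i. num_deg F i = r i}"

text \<open>Number of internal vertices of a tree; for the root this is its hook length.\<close>
fun nint :: "ptree \<Rightarrow> nat" where
  "nint (Node ts) = (if ts = [] then 0 else 1 + sum_list (map nint ts))"

text \<open>The factor ((d-1)h+1)x + 1 - h over d h, as a polynomial in x.\<close>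
definition hook_factor :: "nat \<Rightarrow> nat \<Rightarrow> real poly" where
  "hook_factor d h = [: (1 - real h) / (real d * real h),
                        (real ((d - 1) * h + 1)) / (real d * real h) :]"

fun tree_weight :: "ptree \<Rightarrow> real poly" where
  "tree_weight (Node ts) =
     (if ts = [] then 1
      else hook_factor (length ts) (nint (Node ts)) * prod_list (map tree_weight ts))"

definition forest_weight :: "ptree list \<Rightarrow> real poly" where
  "forest_weight F = prod_list (map tree_weight F)"

definition n_of :: "(nat \<Rightarrow> nat) \<Rightarrow> nat" where
  "n_of r = (\<Sum>d\<in>{d. 1 \<le> d \<and> r d \<noteq> 0}. r d)"

definition ell_of :: "(nat \<Rightarrow> nat) \<Rightarrow> int" where
  "ell_of r = - (\<Sum>d\<in>{d. r d \<noteq> 0}. (int d - 1) * int (r d))"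

end

theory Submission
  imports Defs "HOL-Library.Multiset"
begin

(*
  Both sides satisfy the same recursions in the degree multiset M of the forest (r_d = count M d).
  A forest of l >= 2 trees splits into its first tree and the remaining forest, and a tree with n
  internal vertices into its root, of degree d and hook length n, and the forest of its d subtrees.

  Since r_0 = l + sum_d (d - 1) r_d, the closed form at x = y equals A_l(sigma) / prod_d r_d!, where
  sigma is the multiset of internal degrees and
    A_a(sigma) = a y (c y - 1) (c y - 2) ... (c y - |sigma| + 1),   c = a + sum_(d in sigma) (d - 1),
  is of Abel-Hurwitz type.  The tree recursion then reduces to sum_v d_v f(d_v, n) = r_0 y - (n - 1)
  for the vertex factors f.  The forest recursion is the convolution
  A_(a+b)(U) = sum_(S <= U) A_a(S) A_b(U - S), proved for labelled vertex sets U by induction on a: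
  peel off the children K of one root and apply Vandermonde's identity for falling factorials.
  Counting the subsets with a given multiset of labels carries it over to multisets.
*)

section \<open>Falling factorials and sums of Abel type\<close>

definition falling :: "'a::comm_ring_1 \<Rightarrow> nat \<Rightarrow> 'a" where
  "falling z k = (\<Prod>i<k. z - of_nat i)"

lemma falling_0 [simp]: "falling z 0 = 1"
  by (simp add: falling_def)

lemma falling_Suc: "falling z (Suc k) = falling z k * (z - of_nat k)"
  by (simp add: falling_def)

lemma falling_Suc_left: "falling z (Suc k) = z * falling (z - 1) k"
  unfolding falling_def prod.lessThan_Suc_shift by (simp add: diff_diff_eq)

lemma falling_Vandermonde_Pow:
  assumes "finite U"
  shows "(\<Sum>K\<in>Pow U. falling x (card K) * falling y (card U - card K)) = falling (x + y) (card U)"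
  using assms
proof (induction U rule: finite_induct)
  case empty
  then show ?case by simp
next
  case (insert u U)
  have inj: "inj_on (insert u) (Pow U)"
    using insert.hyps by (auto simp: inj_on_def)
  have card_le: "card K \<le> card U" and card_insert: "card (insert u K) = Suc (card K)"
    if "K \<in> Pow U" for K
    using that insert.hyps by (auto intro: card_mono card_insert_disjoint dest: finite_subset)
  have disj: "Pow U \<inter> insert u ` Pow U = {}"
    using insert.hyps by auto
  have "(\<Sum>K\<in>Pow (insert u U). falling x (card K) * falling y (card (insert u U) - card K))
      = (\<Sum>K\<in>Pow U. falling x (card K) * falling y (Suc (card U) - card K))
        + (\<Sum>K\<in>Pow U. falling x (Suc (card K)) * falling y (card U - card K))"
    using insert.hyps disj by (simp add: Pow_insert sum.union_disjoint sum.reindex[OF inj] card_insert)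
  also have "\<dots> = (\<Sum>K\<in>Pow U. falling x (card K) * falling y (card U - card K)
                                * (x + y - of_nat (card U)))"
    unfolding sum.distrib[symmetric]
  proof (rule sum.cong[OF refl])
    fix K assume "K \<in> Pow U"
    then have "card K \<le> card U" by (rule card_le)
    then show "falling x (card K) * falling y (Suc (card U) - card K)
                 + falling x (Suc (card K)) * falling y (card U - card K)
               = falling x (card K) * falling y (card U - card K) * (x + y - of_nat (card U))"
      by (simp add: Suc_diff_le falling_Suc algebra_simps)
  qed
  also have "\<dots> = falling (x + y) (card (insert u U))"
    using insert by (simp add: sum_distrib_right[symmetric] falling_Suc)
  finally show ?case .
qed

lemma sum_Pow_sum_Diff_swap:
  assumes "finite U"
  shows "(\<Sum>K\<in>Pow U. \<Sum>i\<in>U - K. f i K) = (\<Sum>i\<in>U. \<Sum>K\<in>Pow (U - {i}). f i K)"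
proof -
  have "(\<Sum>K\<in>Pow U. \<Sum>i\<in>U - K. f i K) = (\<Sum>K\<in>Pow U. \<Sum>i\<in>U. if i \<notin> K then f i K else 0)"
    by (rule sum.cong[OF refl]) (simp add: sum.inter_filter[symmetric] assms set_diff_eq)
  also have "\<dots> = (\<Sum>i\<in>U. \<Sum>K\<in>Pow U. if i \<notin> K then f i K else 0)"
    by (rule sum.swap)
  also have "\<dots> = (\<Sum>i\<in>U. \<Sum>K\<in>Pow (U - {i}). f i K)"
  proof (rule sum.cong[OF refl])
    fix i
    have "{K \<in> Pow U. i \<notin> K} = Pow (U - {i})" by auto
    then show "(\<Sum>K\<in>Pow U. if i \<notin> K then f i K else 0) = (\<Sum>K\<in>Pow (U - {i}). f i K)"
      using assms by (simp add: sum.inter_filter[symmetric])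
  qed
  finally show ?thesis .
qed

lemma sum_Pow_Pow_Diff:
  assumes "finite U"
  shows "(\<Sum>K\<in>Pow U. \<Sum>S\<in>Pow (U - K). g K S) = (\<Sum>S\<in>Pow U. \<Sum>K\<in>Pow S. g K (S - K))"
proof -
  have "(\<Sum>K\<in>Pow U. \<Sum>S\<in>Pow (U - K). g K S) = (\<Sum>(K, S)\<in>Sigma (Pow U) (\<lambda>K. Pow (U - K)). g K S)"
    using assms by (intro sum.Sigma) auto
  also have "\<dots> = (\<Sum>(S, K)\<in>Sigma (Pow U) Pow. g K (S - K))"
  proof -
    have "K \<union> S - K = S" if "S \<subseteq> U - K" for K S :: "'a set"
      using that by blast
    then show ?thesis
      by (intro sum.reindex_bij_witness[where i = "\<lambda>(S, K). (K, S - K)" and j = "\<lambda>(K, S). (K \<union> S, K)"])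
        auto
  qed
  also have "\<dots> = (\<Sum>S\<in>Pow U. \<Sum>K\<in>Pow S. g K (S - K))"
    using assms by (intro sum.Sigma[symmetric]) (auto intro: finite_subset)
  finally show ?thesis .
qed

definition abel :: "'a::comm_ring_1 \<Rightarrow> ('b \<Rightarrow> nat) \<Rightarrow> 'a \<Rightarrow> 'b set \<Rightarrow> 'a" where
  "abel y \<delta> a S =
     (if S = {} then 1 else a * y * falling ((a + of_nat (sum \<delta> S)) * y - 1) (card S - 1))"

lemma abel_empty [simp]: "abel y \<delta> a {} = 1"
  by (simp add: abel_def)

lemma abel_peel:
  fixes y a :: "'a::comm_ring_1" and U :: "'b set"
  assumes fin: "finite U"
  shows "abel y \<delta> a U
           = (\<Sum>K\<in>Pow U. falling y (card K) * abel y \<delta> (a - 1 + of_nat (sum \<delta> K)) (U - K))"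
proof (cases "U = {}")
  case True
  then show ?thesis by simp
next
  case False
  define n where "n = card U"
  have n: "n = Suc (n - 1)"
    using False fin by (simp add: n_def card_gt_0_iff)
  define m where "m = a - 1 + of_nat (sum \<delta> U)"
  define g where "g K = falling y (card K) * falling (m * y) (n - card K)" for K :: "'b set"
  define h where "h K = falling y (card K) * y * falling (m * y - 1) (n - 1 - card K)
                        * of_nat (sum \<delta> (U - K))" for K :: "'b set"
  \<comment> \<open>Writing a - 1 + \<delta>(K) = m - \<delta>(U - K) splits each summand into a Vandermonde term g and
      a correction h, which is again a Vandermonde sum after summing over the vertex i \<in> U - K first.\<close>
  have split: "falling y (card K) * abel y \<delta> (a - 1 + of_nat (sum \<delta> K)) (U - K) = g K - h K"
    if "K \<in> Pow U" for K
  proof (cases "K = U")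
    case True
    then show ?thesis by (simp add: g_def h_def n_def)
  next
    case False
    with that have KU: "K \<subset> U" by auto
    then have "card K < n"
      using fin by (simp add: n_def psubset_card_mono)
    then have nK: "n - card K = Suc (n - 1 - card K)" by simp
    have "sum \<delta> U = sum \<delta> K + sum \<delta> (U - K)"
      using sum.subset_diff[of K U \<delta>] fin KU by auto
    then have m: "a - 1 + of_nat (sum \<delta> K) = m - of_nat (sum \<delta> (U - K))"
      by (simp add: m_def)
    have "card (U - K) = n - card K"
      using fin KU by (metis n_def card_Diff_subset finite_subset psubset_imp_subset)
    moreover have "U - K \<noteq> {}" using KU by auto
    ultimately show ?thesis
      unfolding abel_def g_def h_def m nK falling_Suc_left by (simp add: algebra_simps)
  qed
  have sum_g: "(\<Sum>K\<in>Pow U. g K) = falling (y + m * y) n"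
    unfolding g_def n_def by (rule falling_Vandermonde_Pow[OF fin])
  have sum_h: "(\<Sum>K\<in>Pow U. h K) = y * of_nat (sum \<delta> U) * falling (y + m * y - 1) (n - 1)"
  proof -
    have "(\<Sum>K\<in>Pow U. h K) = (\<Sum>K\<in>Pow U. \<Sum>i\<in>U - K. of_nat (\<delta> i) * y
             * (falling y (card K) * falling (m * y - 1) (n - 1 - card K)))"
      unfolding h_def by (intro sum.cong refl) (simp add: sum_distrib_left sum_distrib_right ac_simps)
    also have "\<dots> = (\<Sum>i\<in>U. \<Sum>K\<in>Pow (U - {i}). of_nat (\<delta> i) * y
             * (falling y (card K) * falling (m * y - 1) (n - 1 - card K)))"
      by (rule sum_Pow_sum_Diff_swap[OF fin])
    also have "\<dots> = (\<Sum>i\<in>U. of_nat (\<delta> i) * y * falling (y + (m * y - 1)) (n - 1))"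
    proof (rule sum.cong[OF refl])
      fix i assume "i \<in> U"
      then have "card (U - {i}) = n - 1"
        using fin by (simp add: n_def)
      then show "(\<Sum>K\<in>Pow (U - {i}). of_nat (\<delta> i) * y
                   * (falling y (card K) * falling (m * y - 1) (n - 1 - card K)))
               = of_nat (\<delta> i) * y * falling (y + (m * y - 1)) (n - 1)"
        using falling_Vandermonde_Pow[of "U - {i}" y "m * y - 1"] fin
        by (simp add: sum_distrib_left[symmetric])
    qed
    finally show ?thesis
      by (simp add: sum_distrib_left sum_distrib_right add_diff_eq ac_simps)
  qed
  have "(\<Sum>K\<in>Pow U. falling y (card K) * abel y \<delta> (a - 1 + of_nat (sum \<delta> K)) (U - K))
      = falling (y + m * y) n - y * of_nat (sum \<delta> U) * falling (y + m * y - 1) (n - 1)"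
    using split by (simp add: sum_subtractf sum_g sum_h)
  also have "\<dots> = abel y \<delta> a U"
    using False by (subst n) (simp add: abel_def falling_Suc_left m_def n_def algebra_simps)
  finally show ?thesis ..
qed

lemma abel_convolution:
  fixes y b :: "'a::comm_ring_1" and U :: "'b set"
  assumes "finite U"
  shows "abel y \<delta> (of_nat a + b) U = (\<Sum>S\<in>Pow U. abel y \<delta> (of_nat a) S * abel y \<delta> b (U - S))"
  using assms
proof (induction "a + sum \<delta> U" arbitrary: a U rule: less_induct)
  case less
  show ?case
  proof (cases "a = 0")
    case True
    have "(\<Sum>S\<in>Pow U. abel y \<delta> (of_nat a) S * abel y \<delta> b (U - S))
        = (\<Sum>S\<in>Pow U. if S = {} then abel y \<delta> b U else 0)"
      using True by (intro sum.cong refl) (simp add: abel_def)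
    then show ?thesis
      using True less.prems by simp
  next
    case False
    have IH: "abel y \<delta> (of_nat (a - 1 + sum \<delta> K) + b) (U - K)
        = (\<Sum>S\<in>Pow (U - K). abel y \<delta> (of_nat (a - 1 + sum \<delta> K)) S * abel y \<delta> b (U - K - S))"
      if "K \<in> Pow U" for K
    proof (rule less.hyps)
      have "sum \<delta> U = sum \<delta> (U - K) + sum \<delta> K"
        using that less.prems by (simp add: sum.subset_diff)
      then show "a - 1 + sum \<delta> K + sum \<delta> (U - K) < a + sum \<delta> U"
        using False by simp
    qed (use less.prems in simp)
    have shift: "of_nat a + b - 1 + of_nat (sum \<delta> K) = of_nat (a - 1 + sum \<delta> K) + b" for K
      using False by (simp add: of_nat_diff)
    have "abel y \<delta> (of_nat a + b) U
        = (\<Sum>K\<in>Pow U. \<Sum>S\<in>Pow (U - K). falling y (card K)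
             * abel y \<delta> (of_nat (a - 1 + sum \<delta> K)) S * abel y \<delta> b (U - K - S))"
      unfolding abel_peel[OF less.prems] shift
      by (intro sum.cong refl) (simp only: IH sum_distrib_left mult.assoc)
    also have "\<dots> = (\<Sum>S\<in>Pow U. \<Sum>K\<in>Pow S. falling y (card K)
             * abel y \<delta> (of_nat (a - 1 + sum \<delta> K)) (S - K) * abel y \<delta> b (U - S))"
    proof -
      have "U - K - (S - K) = U - S" if "K \<subseteq> S" for K S :: "'b set"
        using that by blast
      then show ?thesis
        unfolding sum_Pow_Pow_Diff[OF less.prems] by (intro sum.cong refl) auto
    qed
    also have "\<dots> = (\<Sum>S\<in>Pow U. abel y \<delta> (of_nat a) S * abel y \<delta> b (U - S))"
    proof (rule sum.cong[OF refl])
      fix S assume "S \<in> Pow U"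
      then have "finite S" using less.prems by (auto intro: finite_subset)
      then show "(\<Sum>K\<in>Pow S. falling y (card K) * abel y \<delta> (of_nat (a - 1 + sum \<delta> K)) (S - K)
                   * abel y \<delta> b (U - S)) = abel y \<delta> (of_nat a) S * abel y \<delta> b (U - S)"
        using False by (simp add: abel_peel[of S] sum_distrib_right of_nat_diff diff_add_eq)
    qed
    finally show ?thesis .
  qed
qed

section \<open>Sub-multisets and multinomial coefficients\<close>

lemma finite_submultisets: "finite {\<sigma>. \<sigma> \<subseteq># \<rho>}"
proof (rule finite_subset)
  show "{\<sigma>. \<sigma> \<subseteq># \<rho>} \<subseteq> mset ` {xs. set xs \<subseteq> set_mset \<rho> \<and> length xs \<le> size \<rho>}"
  proof
    fix \<sigma> assume "\<sigma> \<in> {\<sigma>. \<sigma> \<subseteq># \<rho>}"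
    then have \<sigma>: "\<sigma> \<subseteq># \<rho>" by simp
    obtain xs where xs: "mset xs = \<sigma>" using ex_mset by blast
    have "set xs \<subseteq> set_mset \<rho>" "length xs \<le> size \<rho>"
      using set_mset_mono[OF \<sigma>] size_mset_mono[OF \<sigma>] xs by auto
    with xs show "\<sigma> \<in> mset ` {xs. set xs \<subseteq> set_mset \<rho> \<and> length xs \<le> size \<rho>}"
      by blast
  qed
qed (simp add: finite_lists_length_le)

definition mfact :: "'a multiset \<Rightarrow> nat" where
  "mfact \<rho> = (\<Prod>x\<in>set_mset \<rho>. fact (count \<rho> x))"

(* Ranging over the elements of \<sigma> too makes mchoose \<rho> \<sigma> vanish unless \<sigma> \<subseteq># \<rho>. *)
definition mchoose :: "'a multiset \<Rightarrow> 'a multiset \<Rightarrow> nat" where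
  "mchoose \<rho> \<sigma> = (\<Prod>x\<in>set_mset \<rho> \<union> set_mset \<sigma>. count \<rho> x choose count \<sigma> x)"

lemma mfact_pos: "0 < mfact \<rho>"
  by (simp add: mfact_def prod_pos)

lemma mfact_eq_prod_superset:
  assumes "finite D" "set_mset \<rho> \<subseteq> D"
  shows "mfact \<rho> = (\<Prod>x\<in>D. fact (count \<rho> x))"
  unfolding mfact_def by (rule prod.mono_neutral_left[OF assms]) (auto simp: not_in_iff)

lemma mchoose_eq_prod_superset:
  assumes "finite D" "set_mset \<rho> \<union> set_mset \<sigma> \<subseteq> D"
  shows "mchoose \<rho> \<sigma> = (\<Prod>x\<in>D. count \<rho> x choose count \<sigma> x)"
  unfolding mchoose_def by (rule prod.mono_neutral_left[OF assms]) (auto simp: not_in_iff)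

lemma mchoose_eq_0:
  assumes "\<not> \<sigma> \<subseteq># \<rho>"
  shows "mchoose \<rho> \<sigma> = 0"
proof -
  obtain x where x: "count \<rho> x < count \<sigma> x"
    using assms by (meson not_le subseteq_mset_def)
  then have "x \<in># \<sigma>"
    by (intro count_inI) simp
  moreover have "(count \<rho> x choose count \<sigma> x) = 0"
    using x by simp
  ultimately show ?thesis
    unfolding mchoose_def by (meson UnI2 finite_Un finite_set_mset prod_zero_iff)
qed

lemma mchoose_add_mset:
  "mchoose (add_mset x \<rho>) \<sigma>
     = mchoose \<rho> \<sigma> + (if x \<in># \<sigma> then mchoose \<rho> (\<sigma> - {#x#}) else 0)"
proof -
  define D where "D = insert x (set_mset \<rho> \<union> set_mset \<sigma>)"
  have D: "finite D" "x \<in> D"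
    by (simp_all add: D_def)
  have superset: "mchoose \<rho>' \<sigma>' = (\<Prod>e\<in>D. count \<rho>' e choose count \<sigma>' e)"
    if "set_mset \<rho>' \<union> set_mset \<sigma>' \<subseteq> D" for \<rho>' \<sigma>'
    by (rule mchoose_eq_prod_superset[OF D(1) that])
  define P where "P = (\<Prod>e\<in>D - {x}. count \<rho> e choose count \<sigma> e)"
  have P: "(\<Prod>e\<in>D - {x}. count (add_mset x \<rho>) e choose count \<sigma> e) = P"
          "(\<Prod>e\<in>D - {x}. count \<rho> e choose count (\<sigma> - {#x#}) e) = P"
    unfolding P_def by (rule prod.cong[OF refl], auto)+
  have "mchoose (add_mset x \<rho>) \<sigma> = (\<Prod>e\<in>D. count (add_mset x \<rho>) e choose count \<sigma> e)"
    by (rule superset) (auto simp: D_def)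
  then have add: "mchoose (add_mset x \<rho>) \<sigma> = (Suc (count \<rho> x) choose count \<sigma> x) * P"
    unfolding prod.remove[OF D] P by simp
  have "mchoose \<rho> \<sigma> = (\<Prod>e\<in>D. count \<rho> e choose count \<sigma> e)"
    by (rule superset) (auto simp: D_def)
  then have same: "mchoose \<rho> \<sigma> = (count \<rho> x choose count \<sigma> x) * P"
    unfolding prod.remove[OF D] P_def .
  have "mchoose \<rho> (\<sigma> - {#x#}) = (\<Prod>e\<in>D. count \<rho> e choose count (\<sigma> - {#x#}) e)"
    by (rule superset) (auto simp: D_def dest: in_diffD)
  then have remove: "mchoose \<rho> (\<sigma> - {#x#}) = (count \<rho> x choose (count \<sigma> x - 1)) * P"
    unfolding prod.remove[OF D] P by simp
  show ?thesis
  proof (cases "count \<sigma> x")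
    case 0
    moreover from 0 have "x \<notin># \<sigma>" by (simp add: not_in_iff)
    ultimately show ?thesis using add same by simp
  next
    case (Suc k)
    moreover from Suc have "x \<in># \<sigma>" by (intro count_inI) simp
    ultimately show ?thesis using add same remove by (simp add: add_mult_distrib)
  qed
qed

lemma mchoose_mult_mfact:
  assumes "\<sigma> \<subseteq># \<rho>"
  shows "mchoose \<rho> \<sigma> * mfact \<sigma> * mfact (\<rho> - \<sigma>) = mfact \<rho>"
proof -
  have D: "set_mset \<sigma> \<subseteq> set_mset \<rho>" "set_mset (\<rho> - \<sigma>) \<subseteq> set_mset \<rho>"
    using assms by (auto dest: set_mset_mono in_diffD)
  have "mchoose \<rho> \<sigma> * mfact \<sigma> * mfact (\<rho> - \<sigma>)
      = (\<Prod>x\<in>set_mset \<rho>. (count \<rho> x choose count \<sigma> x) * fact (count \<sigma> x) * fact (count (\<rho> - \<sigma>) x))"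
    using D by (simp only: mchoose_eq_prod_superset[of "set_mset \<rho>"] mfact_eq_prod_superset[of "set_mset \<rho>"]
        prod.distrib finite_set_mset Un_absorb2 order_refl)
  also have "\<dots> = mfact \<rho>"
    unfolding mfact_def
  proof (rule prod.cong[OF refl])
    fix x
    have "count \<sigma> x \<le> count \<rho> x"
      using assms by (simp add: subseteq_mset_def)
    then show "(count \<rho> x choose count \<sigma> x) * fact (count \<sigma> x) * fact (count (\<rho> - \<sigma>) x)
               = fact (count \<rho> x)"
      using binomial_fact_lemma[of "count \<sigma> x" "count \<rho> x"] by (simp add: ac_simps)
  qed
  finally show ?thesis .
qed

lemma mchoose_single: "mchoose \<rho> {#x#} = count \<rho> x"
proof -
  have "mchoose \<rho> {#x#} = (\<Prod>e\<in>insert x (set_mset \<rho>). count \<rho> e choose count {#x#} e)"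
    by (simp add: mchoose_def)
  also have "\<dots> = count \<rho> x * (\<Prod>e\<in>set_mset \<rho> - {x}. count \<rho> e choose count {#x#} e)"
    by (simp add: prod.insert_remove)
  also have "(\<Prod>e\<in>set_mset \<rho> - {x}. count \<rho> e choose count {#x#} e) = 1"
    by (rule prod.neutral) auto
  finally show ?thesis by simp
qed

lemma mfact_remove:
  assumes "x \<in># \<rho>"
  shows "mfact \<rho> = count \<rho> x * mfact (\<rho> - {#x#})"
  using mchoose_mult_mfact[of "{#x#}" \<rho>] assms by (simp add: mchoose_single mfact_def)

lemma sum_Pow_image_mset:
  assumes "finite U"
  shows "(\<Sum>S\<in>Pow U. g (image_mset f (mset_set S)))
       = (\<Sum>\<sigma> | \<sigma> \<subseteq># image_mset f (mset_set U). of_nat (mchoose (image_mset f (mset_set U)) \<sigma>) * g \<sigma>)"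
  using assms
proof (induction U arbitrary: g rule: finite_induct)
  case empty
  have "{\<sigma>. \<sigma> \<subseteq># {#}} = {{#}}" by auto
  then show ?case by (simp add: mchoose_def)
next
  case (insert u U)
  define \<rho> where "\<rho> = image_mset f (mset_set U)"
  have \<rho>: "image_mset f (mset_set (insert u U)) = add_mset (f u) \<rho>"
    using insert.hyps by (simp add: \<rho>_def)
  have image_insert: "image_mset f (mset_set (insert u S)) = add_mset (f u) (image_mset f (mset_set S))"
    if "S \<in> Pow U" for S
  proof -
    have "finite S" "u \<notin> S"
      using that insert.hyps by (auto dest: finite_subset)
    then show ?thesis by simp
  qed
  have inj: "inj_on (insert u) (Pow U)"
    using insert.hyps by (auto simp: inj_on_def)
  have disj: "Pow U \<inter> insert u ` Pow U = {}"
    using insert.hyps by auto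
  have "(\<Sum>S\<in>Pow (insert u U). g (image_mset f (mset_set S)))
      = (\<Sum>S\<in>Pow U. g (image_mset f (mset_set S))) + (\<Sum>S\<in>Pow U. g (add_mset (f u) (image_mset f (mset_set S))))"
    using insert.hyps disj by (simp add: Pow_insert sum.union_disjoint sum.reindex[OF inj] image_insert)
  also have "\<dots> = (\<Sum>\<sigma> | \<sigma> \<subseteq># \<rho>. of_nat (mchoose \<rho> \<sigma>) * g \<sigma>)
                 + (\<Sum>\<tau> | \<tau> \<subseteq># \<rho>. of_nat (mchoose \<rho> \<tau>) * g (add_mset (f u) \<tau>))"
    unfolding \<rho>_def by (simp only: insert.IH[of g] insert.IH[of "\<lambda>\<sigma>. g (add_mset (f u) \<sigma>)"])
  also have "(\<Sum>\<sigma> | \<sigma> \<subseteq># \<rho>. of_nat (mchoose \<rho> \<sigma>) * g \<sigma>)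
           = (\<Sum>\<sigma> | \<sigma> \<subseteq># add_mset (f u) \<rho>. of_nat (mchoose \<rho> \<sigma>) * g \<sigma>)"
    by (rule sum.mono_neutral_left) (auto simp: finite_submultisets mchoose_eq_0 intro: subset_mset.order_trans)
  also have "(\<Sum>\<tau> | \<tau> \<subseteq># \<rho>. of_nat (mchoose \<rho> \<tau>) * g (add_mset (f u) \<tau>))
           = (\<Sum>\<sigma> | \<sigma> \<subseteq># add_mset (f u) \<rho>.
                 if f u \<in># \<sigma> then of_nat (mchoose \<rho> (\<sigma> - {#f u#})) * g \<sigma> else 0)"
    unfolding sum.inter_filter[OF finite_submultisets, symmetric]
    by (rule sum.reindex_bij_witness[where i = "\<lambda>\<sigma>. \<sigma> - {#f u#}" and j = "add_mset (f u)"])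
      (auto simp: subset_eq_diff_conv)
  also have "(\<Sum>\<sigma> | \<sigma> \<subseteq># add_mset (f u) \<rho>. of_nat (mchoose \<rho> \<sigma>) * g \<sigma>)
      + (\<Sum>\<sigma> | \<sigma> \<subseteq># add_mset (f u) \<rho>.
            if f u \<in># \<sigma> then of_nat (mchoose \<rho> (\<sigma> - {#f u#})) * g \<sigma> else 0)
      = (\<Sum>\<sigma> | \<sigma> \<subseteq># add_mset (f u) \<rho>. of_nat (mchoose (add_mset (f u) \<rho>) \<sigma>) * g \<sigma>)"
    unfolding sum.distrib[symmetric] by (intro sum.cong refl) (simp add: mchoose_add_mset distrib_right)
  finally show ?case
    unfolding \<rho> .
qed

lemma mset_eq_image_mset_set:
  obtains U :: "nat set" and f where "finite U" "\<rho> = image_mset f (mset_set U)"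
proof -
  obtain xs where "mset xs = \<rho>"
    using ex_mset by blast
  then have "\<rho> = image_mset (nth xs) (mset_set {..<length xs})"
    by (metis map_nth mset_map mset_upt atLeast0LessThan)
  then show ?thesis
    using that by blast
qed

definition abel_mset :: "'a::comm_ring_1 \<Rightarrow> ('b \<Rightarrow> nat) \<Rightarrow> 'a \<Rightarrow> 'b multiset \<Rightarrow> 'a" where
  "abel_mset y \<delta> a \<sigma> =
     (if \<sigma> = {#} then 1 else a * y * falling ((a + of_nat (\<Sum>x\<in>#\<sigma>. \<delta> x)) * y - 1) (size \<sigma> - 1))"

lemma abel_mset_image_mset_set:
  assumes "finite S"
  shows "abel_mset y \<delta> a (image_mset f (mset_set S)) = abel y (\<delta> \<circ> f) a S"
  using assms by (simp add: abel_mset_def abel_def sum_unfold_sum_mset image_mset.compositionality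
      mset_set_empty_iff comp_def)

lemma abel_mset_convolution:
  "abel_mset y \<delta> (of_nat a + b) \<rho>
     = (\<Sum>\<sigma> | \<sigma> \<subseteq># \<rho>. of_nat (mchoose \<rho> \<sigma>) * (abel_mset y \<delta> (of_nat a) \<sigma> * abel_mset y \<delta> b (\<rho> - \<sigma>)))"
proof -
  obtain U :: "nat set" and f where U: "finite U" and \<rho>: "\<rho> = image_mset f (mset_set U)"
    by (rule mset_eq_image_mset_set)
  have diff: "\<rho> - image_mset f (mset_set S) = image_mset f (mset_set (U - S))" if "S \<in> Pow U" for S
  proof -
    have "mset_set U = mset_set S + mset_set (U - S)"
      using that U by (metis PowD Un_Diff_cancel Un_absorb1 Diff_disjoint mset_set_Union finite_Diff finite_subset)
    then show ?thesis
      unfolding \<rho> by simp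
  qed
  have "abel_mset y \<delta> (of_nat a + b) \<rho> = (\<Sum>S\<in>Pow U. abel y (\<delta> \<circ> f) (of_nat a) S * abel y (\<delta> \<circ> f) b (U - S))"
    unfolding \<rho> abel_mset_image_mset_set[OF U] by (rule abel_convolution[OF U])
  also have "\<dots> = (\<Sum>S\<in>Pow U. abel_mset y \<delta> (of_nat a) (image_mset f (mset_set S))
                              * abel_mset y \<delta> b (\<rho> - image_mset f (mset_set S)))"
    using U by (intro sum.cong refl) (simp add: diff abel_mset_image_mset_set finite_subset)
  also have "\<dots> = (\<Sum>\<sigma> | \<sigma> \<subseteq># \<rho>. of_nat (mchoose \<rho> \<sigma>) * (abel_mset y \<delta> (of_nat a) \<sigma> * abel_mset y \<delta> b (\<rho> - \<sigma>)))"
    unfolding \<rho> by (rule sum_Pow_image_mset[OF U])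
  finally show ?thesis .
qed

section \<open>Degree multisets and the closed form\<close>

lemma sum_mset_eq_sum_count:
  fixes f :: "'a \<Rightarrow> 'b::comm_semiring_1"
  assumes "finite D" "set_mset M \<subseteq> D"
  shows "(\<Sum>x\<in>#M. f x) = (\<Sum>x\<in>D. of_nat (count M x) * f x)"
  using assms(2)
proof (induction M)
  case empty
  then show ?case by simp
next
  case (add x M)
  have "(\<Sum>e\<in>D. of_nat (count (add_mset x M) e) * f e)
      = (\<Sum>e\<in>D. of_nat (count M e) * f e) + (\<Sum>e\<in>D. if e = x then f e else 0)"
    unfolding sum.distrib[symmetric] by (rule sum.cong[OF refl]) (auto simp: algebra_simps)
  with add assms(1) show ?case
    by (simp add: sum.delta add.commute)
qed

definition internal_degs :: "nat multiset \<Rightarrow> nat multiset" where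
  "internal_degs M = filter_mset (\<lambda>d. d \<noteq> 0) M"

definition ell_mset :: "nat multiset \<Rightarrow> int" where
  "ell_mset M = (\<Sum>d\<in>#M. 1 - int d)"

definition closed_form :: "nat multiset \<Rightarrow> real poly" where
  "closed_form M = smult (real_of_int (ell_of (count M)) / real (count M 0)
                          / (\<Prod>d\<in>{d. 1 \<le> d \<and> count M d \<noteq> 0}. real (fact (count M d))))
                     (\<Prod>k<n_of (count M). [: - real k, real (count M 0) :])"

lemma internal_degs_simps [simp]:
  "internal_degs {#} = {#}"
  "internal_degs (add_mset d M) = (if d = 0 then internal_degs M else add_mset d (internal_degs M))"
  "internal_degs (M + N) = internal_degs M + internal_degs N"
  by (simp_all add: internal_degs_def)

lemma count_internal_degs: "count (internal_degs M) d = (if d = 0 then 0 else count M d)"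
  by (simp add: internal_degs_def)

lemma zero_not_in_internal_degs [simp]: "0 \<notin># internal_degs M"
  by (simp add: internal_degs_def)

lemma set_mset_internal_degs: "set_mset (internal_degs M) = {d. 1 \<le> d \<and> count M d \<noteq> 0}"
  by (auto simp: internal_degs_def)

lemma ell_mset_simps [simp]:
  "ell_mset {#} = 0"
  "ell_mset (add_mset d M) = 1 - int d + ell_mset M"
  "ell_mset (M + N) = ell_mset M + ell_mset N"
  by (simp_all add: ell_mset_def)

lemma ell_mset_diff:
  assumes "s \<subseteq># M"
  shows "ell_mset (M - s) = ell_mset M - ell_mset s"
proof -
  have "ell_mset M = ell_mset (s + (M - s))"
    using assms by simp
  then show ?thesis by simp
qed

lemma count_0_eq_ell_mset: "int (count M 0) = ell_mset M + int (\<Sum>d\<in>#internal_degs M. d - 1)"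
  by (induction M) auto

lemma ell_of_count: "ell_of (count M) = ell_mset M"
  unfolding ell_of_def ell_mset_def
  by (subst sum_mset_eq_sum_count[of "set_mset M"]) (auto simp: sum_negf[symmetric] algebra_simps intro!: sum.cong)

lemma n_of_count: "n_of (count M) = size (internal_degs M)"
proof -
  have "size (internal_degs M) = (\<Sum>d\<in>#internal_degs M. 1::nat)"
    by (simp add: size_multiset_overloaded_eq sum_mset_constant)
  also have "\<dots> = n_of (count M)"
    unfolding n_of_def set_mset_internal_degs[symmetric]
    by (subst sum_mset_eq_sum_count[of "set_mset (internal_degs M)"]) (auto simp: count_internal_degs intro!: sum.cong)
  finally show ?thesis ..
qed

lemma prod_fact_count: "(\<Prod>d\<in>{d. 1 \<le> d \<and> count M d \<noteq> 0}. real (fact (count M d))) = real (mfact (internal_degs M))"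
  unfolding mfact_def set_mset_internal_degs[symmetric]
  by (auto simp: count_internal_degs intro!: prod.cong)

lemma poly_closed_form:
  "poly (closed_form M) y = of_int (ell_mset M) / real (count M 0) / real (mfact (internal_degs M))
                            * falling (real (count M 0) * y) (size (internal_degs M))"
  unfolding closed_form_def ell_of_count n_of_count prod_fact_count
  by (simp add: poly_prod falling_def algebra_simps)

lemma poly_closed_form_abel_mset:
  assumes "1 \<le> ell_mset M"
  shows "poly (closed_form M) y
           = abel_mset y (\<lambda>d. d - 1) (of_int (ell_mset M)) (internal_degs M) / real (mfact (internal_degs M))"
proof -
  define s where "s = (\<Sum>d\<in>#internal_degs M. d - 1)"
  define c where "c = real (count M 0)"
  have count_0: "int (count M 0) = ell_mset M + int s"
    unfolding s_def by (rule count_0_eq_ell_mset)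
  then have c: "c = of_int (ell_mset M) + real s"
    unfolding c_def by (metis of_int_add of_int_of_nat_eq)
  have "0 < count M 0"
    using count_0 assms by linarith
  then have "0 < c"
    by (simp add: c_def)
  show ?thesis
  proof (cases "internal_degs M = {#}")
    case True
    with c \<open>0 < c\<close> show ?thesis
      unfolding poly_closed_form abel_mset_def c_def[symmetric] by (simp add: s_def mfact_def)
  next
    case False
    then obtain m where m: "size (internal_degs M) = Suc m"
      by (cases "size (internal_degs M)") auto
    have "poly (closed_form M) y
        = of_int (ell_mset M) / c / real (mfact (internal_degs M)) * (c * y * falling (c * y - 1) m)"
      unfolding poly_closed_form m falling_Suc_left c_def by simp
    also have "\<dots> = of_int (ell_mset M) * y * falling (c * y - 1) m / real (mfact (internal_degs M))"
      using \<open>0 < c\<close> by (simp add: field_simps)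
    finally show ?thesis
      using False by (simp add: abel_mset_def m c s_def)
  qed
qed

lemma internal_degs_add_zeros: "M = internal_degs M + replicate_mset (count M 0) 0"
  by (auto simp: multiset_eq_iff count_internal_degs)

lemma internal_degs_mono: "\<sigma> \<subseteq># M \<Longrightarrow> internal_degs \<sigma> \<subseteq># internal_degs M"
  by (simp add: internal_degs_def multiset_filter_mono)

lemma internal_degs_diff: "s \<subseteq># M \<Longrightarrow> internal_degs (M - s) = internal_degs M - internal_degs s"
  by (metis add_diff_cancel_left' internal_degs_simps(3) subset_mset.add_diff_inverse)

(* A tree type is determined by its internal degrees, as it has 1 + sum (d - 1) leaves. *)
lemma bij_betw_internal_degs:
  assumes "1 \<le> ell_mset M"
  shows "bij_betw internal_degs {s. s \<subseteq># M \<and> ell_mset s = 1} {\<sigma>. \<sigma> \<subseteq># internal_degs M}"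
proof (rule bij_betw_byWitness[where f' = "\<lambda>\<sigma>. \<sigma> + replicate_mset (Suc (\<Sum>d\<in>#\<sigma>. d - 1)) 0"])
  have zeros: "count s 0 = Suc (\<Sum>d\<in>#internal_degs s. d - 1)" if "ell_mset s = 1" for s
    using count_0_eq_ell_mset[of s] that by linarith
  show "\<forall>s\<in>{s. s \<subseteq># M \<and> ell_mset s = 1}.
          internal_degs s + replicate_mset (Suc (\<Sum>d\<in>#internal_degs s. d - 1)) 0 = s"
  proof
    fix s assume "s \<in> {s. s \<subseteq># M \<and> ell_mset s = 1}"
    then have "count s 0 = Suc (\<Sum>d\<in>#internal_degs s. d - 1)"
      by (simp add: zeros)
    with internal_degs_add_zeros[of s]
    show "internal_degs s + replicate_mset (Suc (\<Sum>d\<in>#internal_degs s. d - 1)) 0 = s"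
      by simp
  qed
  have internal_id: "internal_degs \<sigma> = \<sigma>" if "0 \<notin># \<sigma>" for \<sigma>
    using that by (auto simp: internal_degs_def multiset_eq_iff not_in_iff)
  have sub_zero_free: "0 \<notin># \<sigma>" if "\<sigma> \<subseteq># internal_degs M" for \<sigma>
    using that by (auto dest: mset_subset_eqD)
  show "\<forall>\<sigma>\<in>{\<sigma>. \<sigma> \<subseteq># internal_degs M}.
          internal_degs (\<sigma> + replicate_mset (Suc (\<Sum>d\<in>#\<sigma>. d - 1)) 0) = \<sigma>"
    using internal_id sub_zero_free by (auto simp: internal_degs_def)
  show "internal_degs ` {s. s \<subseteq># M \<and> ell_mset s = 1} \<subseteq> {\<sigma>. \<sigma> \<subseteq># internal_degs M}"
    by (auto intro: internal_degs_mono)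
  show "(\<lambda>\<sigma>. \<sigma> + replicate_mset (Suc (\<Sum>d\<in>#\<sigma>. d - 1)) 0) ` {\<sigma>. \<sigma> \<subseteq># internal_degs M}
          \<subseteq> {s. s \<subseteq># M \<and> ell_mset s = 1}"
  proof clarify
    fix \<sigma> assume \<sigma>: "\<sigma> \<subseteq># internal_degs M"
    obtain \<tau> where "internal_degs M = \<sigma> + \<tau>"
      using \<sigma> by (metis subset_mset.add_diff_inverse)
    then have "(\<Sum>d\<in>#\<sigma>. d - 1) \<le> (\<Sum>d\<in>#internal_degs M. d - 1)"
      by simp
    then have "Suc (\<Sum>d\<in>#\<sigma>. d - 1) \<le> count M 0"
      using count_0_eq_ell_mset[of M] assms by linarith
    moreover have "count \<sigma> d \<le> count M d" if "d \<noteq> 0" for d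
      using \<sigma> that by (metis count_internal_degs mset_subset_eq_count)
    ultimately have "\<sigma> + replicate_mset (Suc (\<Sum>d\<in>#\<sigma>. d - 1)) 0 \<subseteq># M"
      using sub_zero_free[OF \<sigma>] by (auto simp: subseteq_mset_def not_in_iff)
    moreover have "ell_mset \<sigma> = - int (\<Sum>d\<in>#\<sigma>. d - 1)"
      using count_0_eq_ell_mset[of \<sigma>] internal_id sub_zero_free[OF \<sigma>] by (simp add: not_in_iff)
    ultimately show "\<sigma> + replicate_mset (Suc (\<Sum>d\<in>#\<sigma>. d - 1)) 0 \<subseteq># M
        \<and> ell_mset (\<sigma> + replicate_mset (Suc (\<Sum>d\<in>#\<sigma>. d - 1)) 0) = 1"
      by (simp add: ell_mset_def)
  qed
qed

lemma closed_form_convolution: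
  assumes "2 \<le> ell_mset M"
  shows "(\<Sum>s | s \<subseteq># M \<and> ell_mset s = 1. closed_form s * closed_form (M - s)) = closed_form M"
proof (intro poly_eq_poly_eq_iff[THEN iffD1] ext)
  fix y :: real
  define \<rho> where "\<rho> = internal_degs M"
  define A where "A a \<sigma> = abel_mset y (\<lambda>d. d - 1) a \<sigma> / real (mfact \<sigma>)" for a \<sigma>
  define b where "b = of_int (ell_mset M) - (1::real)"
  have poly_split: "poly (closed_form s) y * poly (closed_form (M - s)) y
                    = A 1 (internal_degs s) * A b (\<rho> - internal_degs s)"
    if "s \<in> {s. s \<subseteq># M \<and> ell_mset s = 1}" for s
  proof -
    from that have s: "s \<subseteq># M" "ell_mset s = 1" by auto
    then have "ell_mset (M - s) = ell_mset M - 1"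
      by (simp add: ell_mset_diff)
    then show ?thesis
      using assms s poly_closed_form_abel_mset[of s y] poly_closed_form_abel_mset[of "M - s" y]
      by (simp add: A_def b_def \<rho>_def internal_degs_diff)
  qed
  have "poly (\<Sum>s | s \<subseteq># M \<and> ell_mset s = 1. closed_form s * closed_form (M - s)) y
      = (\<Sum>s | s \<subseteq># M \<and> ell_mset s = 1. A 1 (internal_degs s) * A b (\<rho> - internal_degs s))"
    by (simp add: poly_sum poly_split)
  also have "\<dots> = (\<Sum>\<sigma> | \<sigma> \<subseteq># \<rho>. A 1 \<sigma> * A b (\<rho> - \<sigma>))"
    using bij_betw_internal_degs[of M] assms unfolding \<rho>_def
    by (intro sum.reindex_bij_betw) simp
  also have "\<dots> = (\<Sum>\<sigma> | \<sigma> \<subseteq># \<rho>. of_nat (mchoose \<rho> \<sigma>)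
                    * (abel_mset y (\<lambda>d. d - 1) (of_nat 1) \<sigma> * abel_mset y (\<lambda>d. d - 1) b (\<rho> - \<sigma>)))
                  / real (mfact \<rho>)"
    unfolding sum_divide_distrib
  proof (rule sum.cong[OF refl])
    fix \<sigma> assume "\<sigma> \<in> {\<sigma>. \<sigma> \<subseteq># \<rho>}"
    then have mfact: "mchoose \<rho> \<sigma> * mfact \<sigma> * mfact (\<rho> - \<sigma>) = mfact \<rho>"
      by (simp add: mchoose_mult_mfact)
    then have "mchoose \<rho> \<sigma> \<noteq> 0"
      using mfact_pos[of \<rho>] by (metis mult_0 less_irrefl)
    moreover have "real (mfact \<rho>) = real (mchoose \<rho> \<sigma>) * real (mfact \<sigma>) * real (mfact (\<rho> - \<sigma>))"
      by (simp flip: mfact)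
    ultimately show "A 1 \<sigma> * A b (\<rho> - \<sigma>) = of_nat (mchoose \<rho> \<sigma>)
                 * (abel_mset y (\<lambda>d. d - 1) (of_nat 1) \<sigma> * abel_mset y (\<lambda>d. d - 1) b (\<rho> - \<sigma>))
                 / real (mfact \<rho>)"
      using mfact_pos[of \<sigma>] mfact_pos[of "\<rho> - \<sigma>"] by (simp add: A_def)
  qed
  also have "\<dots> = A (of_int (ell_mset M)) \<rho>"
    using abel_mset_convolution[of y "\<lambda>d. d - 1" 1 b \<rho>] by (simp add: A_def b_def)
  also have "\<dots> = poly (closed_form M) y"
    using assms by (simp add: A_def \<rho>_def poly_closed_form_abel_mset)
  finally show "poly (\<Sum>s | s \<subseteq># M \<and> ell_mset s = 1. closed_form s * closed_form (M - s)) y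
              = poly (closed_form M) y" .
qed

lemma poly_hook_factor:
  assumes "0 < d" "0 < n"
  shows "real d * poly (hook_factor d n) y = real (d - 1) * y + (y + 1 - real n) / real n"
  using assms by (simp add: hook_factor_def of_nat_diff field_simps)

lemma sum_mset_poly_hook_factor:
  assumes "0 \<notin># \<rho>" "\<rho> \<noteq> {#}"
  shows "(\<Sum>d\<in>#\<rho>. real d * poly (hook_factor d (size \<rho>)) y)
           = (1 + real (\<Sum>d\<in>#\<rho>. d - 1)) * y - real (size \<rho> - 1)"
proof -
  have "(\<Sum>d\<in>#\<rho>. real d * poly (hook_factor d (size \<rho>)) y)
      = (\<Sum>d\<in>#\<rho>. real (d - 1) * y + (y + 1 - real (size \<rho>)) / real (size \<rho>))"
    using assms by (intro arg_cong[where f = sum_mset] image_mset_cong poly_hook_factor)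
      (auto simp: nonempty_has_size intro!: gr0I)
  also have "\<dots> = real (\<Sum>d\<in>#\<rho>. d - 1) * y + real (size \<rho>) * ((y + 1 - real (size \<rho>)) / real (size \<rho>))"
    by (simp add: sum_mset.distrib sum_mset_distrib_right image_mset.compositionality comp_def)
  also have "\<dots> = (1 + real (\<Sum>d\<in>#\<rho>. d - 1)) * y - real (size \<rho> - 1)"
    using assms by (simp add: of_nat_diff nonempty_has_size Suc_le_eq field_simps)
  finally show ?thesis .
qed

lemma closed_form_tree_rec:
  assumes ell: "ell_mset M = 1" and internal: "internal_degs M \<noteq> {#}"
  shows "(\<Sum>d\<in>set_mset (internal_degs M). hook_factor d (size (internal_degs M)) * closed_form (M - {#d#}))
           = closed_form M"
proof (intro poly_eq_poly_eq_iff[THEN iffD1] ext)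
  fix y :: real
  define \<rho> where "\<rho> = internal_degs M"
  define n where "n = size \<rho>"
  define c where "c = real (count M 0)"
  define K where "K = falling (c * y) (n - 1) / (c * real (mfact \<rho>))"
  have "int (count M 0) = 1 + int (\<Sum>d\<in>#\<rho>. d - 1)"
    using count_0_eq_ell_mset[of M] ell by (simp add: \<rho>_def)
  then have c: "c = 1 + real (\<Sum>d\<in>#\<rho>. d - 1)"
    unfolding c_def by (metis of_int_of_nat_eq of_int_add of_int_1 of_nat_1 of_nat_add)
  have n: "n = Suc (n - 1)"
    using internal by (simp add: n_def \<rho>_def nonempty_has_size)
  have subtree: "poly (closed_form (M - {#d#})) y = real (count \<rho> d) * real d * K" if "d \<in># \<rho>" for d
  proof -
    have d: "d \<noteq> 0" "d \<in># M"
      using that by (auto simp: \<rho>_def internal_degs_def)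
    then have "ell_mset (M - {#d#}) = int d"
      using ell by (simp add: ell_mset_diff)
    moreover have "internal_degs (M - {#d#}) = \<rho> - {#d#}"
      using d by (simp add: internal_degs_diff \<rho>_def)
    moreover have "size (\<rho> - {#d#}) = n - 1"
      using that by (simp add: n_def size_Diff_singleton)
    moreover have "mfact \<rho> = count \<rho> d * mfact (\<rho> - {#d#})"
      using that by (rule mfact_remove)
    ultimately show ?thesis
      using d that by (simp add: poly_closed_form K_def c_def field_simps count_eq_zero_iff)
  qed
  have "poly (\<Sum>d\<in>set_mset \<rho>. hook_factor d n * closed_form (M - {#d#})) y
      = (\<Sum>d\<in>set_mset \<rho>. real (count \<rho> d) * (real d * poly (hook_factor d n) y)) * K"
    unfolding poly_sum sum_distrib_right by (intro sum.cong refl) (simp add: subtree)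
  also have "\<dots> = (\<Sum>d\<in>#\<rho>. real d * poly (hook_factor d n) y) * K"
    by (simp add: sum_mset_eq_sum_count[of "set_mset \<rho>"])
  also have "\<dots> = (c * y - real (n - 1)) * K"
    using internal by (simp add: sum_mset_poly_hook_factor c n_def \<rho>_def)
  also have "\<dots> = 1 / c / real (mfact \<rho>) * falling (c * y) n"
  proof -
    have "falling (c * y) n = falling (c * y) (n - 1) * (c * y - real (n - 1))"
      using falling_Suc[of "c * y" "n - 1"] n by simp
    moreover have "0 < c"
      unfolding c by (intro add_pos_nonneg zero_less_one of_nat_0_le_iff)
    ultimately show ?thesis
      using mfact_pos[of \<rho>] by (simp add: K_def field_simps)
  qed
  also have "\<dots> = poly (closed_form M) y"
    using ell by (simp add: poly_closed_form c_def n_def \<rho>_def)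
  finally show "poly (\<Sum>d\<in>set_mset (internal_degs M). hook_factor d (size (internal_degs M))
                      * closed_form (M - {#d#})) y = poly (closed_form M) y"
    by (simp add: \<rho>_def n_def)
qed

lemma closed_form_leaf: "closed_form {#0#} = 1"
  by (simp add: closed_form_def ell_of_count n_of_count prod_fact_count mfact_def)

section \<open>Plane forests of a given degree multiset\<close>

definition forests_with_degs :: "nat multiset \<Rightarrow> ptree list set" where
  "forests_with_degs M = {F. mset (forest_degs F) = M}"

definition hook_sum :: "nat multiset \<Rightarrow> real poly" where
  "hook_sum M = (\<Sum>F\<in>forests_with_degs M. forest_weight F)"

lemma forest_degs_simps [simp]:
  "forest_degs [] = []"
  "forest_degs (t # F) = degs t @ forest_degs F"
  by (simp_all add: forest_degs_def)

lemma forest_weight_simps [simp]: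
  "forest_weight [] = 1"
  "forest_weight (t # F) = tree_weight t * forest_weight F"
  by (simp_all add: forest_weight_def)

lemma ell_mset_degs: "ell_mset (mset (degs t)) = 1"
proof (induction t)
  case (Node ts)
  then have "ell_mset (mset (forest_degs ts)) = int (length ts)"
    by (induction ts) auto
  then show ?case
    by (simp add: forest_degs_def)
qed

lemma ell_mset_forest_degs: "ell_mset (mset (forest_degs F)) = int (length F)"
  by (induction F) (simp_all add: ell_mset_degs)

lemma nint_eq_size_internal_degs: "nint t = size (internal_degs (mset (degs t)))"
proof (induction t)
  case (Node ts)
  then have "size (internal_degs (mset (forest_degs ts))) = sum_list (map nint ts)"
    by (induction ts) auto
  then show ?case
    by (simp add: forest_degs_def)
qed

lemma length_le_length_forest_degs: "length F \<le> length (forest_degs F)"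
proof (induction F)
  case (Cons t F)
  then show ?case by (cases t) simp
qed simp

lemma finite_forests_of_size: "finite {F. length (forest_degs F) = N}"
proof (induction N)
  case 0
  have "{F. length (forest_degs F) = 0} \<subseteq> {[]}"
  proof
    fix F assume "F \<in> {F. length (forest_degs F) = 0}"
    then have "length F \<le> 0"
      using length_le_length_forest_degs[of F] by simp
    then show "F \<in> {[]}" by simp
  qed
  then show ?case
    by (rule finite_subset) simp
next
  case (Suc N)
  let ?build = "\<lambda>(k, G). Node (take k G) # drop k G"
  have "{F. length (forest_degs F) = Suc N} \<subseteq> ?build ` ({..N} \<times> {G. length (forest_degs G) = N})"
  proof
    fix F assume "F \<in> {F. length (forest_degs F) = Suc N}"
    then obtain t H where "F = t # H" "length (forest_degs F) = Suc N"
      by (cases F) auto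
    moreover obtain ts where "t = Node ts"
      by (cases t)
    ultimately have F: "F = Node ts # H" and len: "length (forest_degs (ts @ H)) = N"
      by (simp_all add: forest_degs_def)
    then have "length ts \<le> N"
      using length_le_length_forest_degs[of "ts @ H"] by simp
    with F len show "F \<in> ?build ` ({..N} \<times> {G. length (forest_degs G) = N})"
      by (intro image_eqI[where x = "(length ts, ts @ H)"]) auto
  qed
  moreover have "finite (?build ` ({..N} \<times> {G. length (forest_degs G) = N}))"
    using Suc.IH by simp
  ultimately show ?case
    by (rule finite_subset)
qed

lemma finite_forests_with_degs: "finite (forests_with_degs M)"
  by (rule finite_subset[OF _ finite_forests_of_size[of "size M"]]) (auto simp: forests_with_degs_def)

lemma length_forests_with_degs: "F \<in> forests_with_degs M \<Longrightarrow> int (length F) = ell_mset M"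
  unfolding forests_with_degs_def using ell_mset_forest_degs by auto

lemma length_forests_with_degs_remove:
  assumes "ell_mset M = 1" "d \<in># M" "ts \<in> forests_with_degs (M - {#d#})"
  shows "length ts = d"
  using length_forests_with_degs[OF assms(3)] assms(1,2) by (simp add: ell_mset_diff)

lemma tree_weight_Node:
  assumes "ts \<noteq> []"
  shows "tree_weight (Node ts)
           = hook_factor (length ts) (size (internal_degs (mset (degs (Node ts))))) * forest_weight ts"
  using assms by (simp add: forest_weight_def nint_eq_size_internal_degs[symmetric] del: nint.simps degs.simps)

lemma forests_with_degs_tree:
  assumes ell: "ell_mset M = 1" and internal: "internal_degs M \<noteq> {#}"
  shows "forests_with_degs M
           = (\<Union>d\<in>set_mset (internal_degs M). (\<lambda>ts. [Node ts]) ` forests_with_degs (M - {#d#}))"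
proof (intro equalityI subsetI)
  fix F assume F: "F \<in> forests_with_degs M"
  then have "length F = 1"
    using length_forests_with_degs ell by fastforce
  then obtain ts where F_eq: "F = [Node ts]"
    by (metis One_nat_def length_0_conv length_Suc_conv ptree.exhaust)
  then have M: "M = add_mset (length ts) (mset (forest_degs ts))"
    using F by (simp add: forests_with_degs_def forest_degs_def)
  with internal have "length ts \<in># internal_degs M"
    by (cases "length ts = 0") (auto simp: internal_degs_def)
  moreover have "ts \<in> forests_with_degs (M - {#length ts#})"
    using M by (simp add: forests_with_degs_def)
  ultimately show "F \<in> (\<Union>d\<in>set_mset (internal_degs M). (\<lambda>ts. [Node ts]) ` forests_with_degs (M - {#d#}))"
    using F_eq by blast
next
  fix F assume "F \<in> (\<Union>d\<in>set_mset (internal_degs M). (\<lambda>ts. [Node ts]) ` forests_with_degs (M - {#d#}))"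
  then obtain d ts where d: "d \<in># internal_degs M" and ts: "ts \<in> forests_with_degs (M - {#d#})"
    and F: "F = [Node ts]"
    by blast
  have "d \<in># M"
    using d by (simp add: internal_degs_def)
  moreover have "length ts = d"
    using ell \<open>d \<in># M\<close> ts by (rule length_forests_with_degs_remove)
  ultimately show "F \<in> forests_with_degs M"
    using ts F by (simp add: forests_with_degs_def forest_degs_def)
qed

lemma hook_sum_tree_rec:
  assumes ell: "ell_mset M = 1" and internal: "internal_degs M \<noteq> {#}"
  shows "hook_sum M
           = (\<Sum>d\<in>set_mset (internal_degs M). hook_factor d (size (internal_degs M)) * hook_sum (M - {#d#}))"
proof -
  have length_ts: "length ts = d" if "d \<in># internal_degs M" "ts \<in> forests_with_degs (M - {#d#})" for d ts
    using that ell by (auto simp: internal_degs_def intro: length_forests_with_degs_remove)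
  have "hook_sum M
      = (\<Sum>d\<in>set_mset (internal_degs M). \<Sum>F\<in>(\<lambda>ts. [Node ts]) ` forests_with_degs (M - {#d#}). forest_weight F)"
    unfolding hook_sum_def forests_with_degs_tree[OF assms]
  proof (rule sum.UNION_disjoint)
    show "\<forall>d\<in>set_mset (internal_degs M). \<forall>e\<in>set_mset (internal_degs M). d \<noteq> e \<longrightarrow>
            (\<lambda>ts. [Node ts]) ` forests_with_degs (M - {#d#}) \<inter> (\<lambda>ts. [Node ts]) ` forests_with_degs (M - {#e#}) = {}"
    proof (intro ballI impI equals0I)
      fix d e F assume "d \<in> set_mset (internal_degs M)" "e \<in> set_mset (internal_degs M)" "d \<noteq> e"
        and "F \<in> (\<lambda>ts. [Node ts]) ` forests_with_degs (M - {#d#}) \<inter> (\<lambda>ts. [Node ts]) ` forests_with_degs (M - {#e#})"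
      then show False
        using length_ts by auto
    qed
  qed (simp_all add: finite_forests_with_degs)
  also have "\<dots> = (\<Sum>d\<in>set_mset (internal_degs M). \<Sum>ts\<in>forests_with_degs (M - {#d#}). forest_weight [Node ts])"
    by (intro sum.cong refl sum.reindex[unfolded comp_def]) (simp add: inj_on_def)
  also have "\<dots> = (\<Sum>d\<in>set_mset (internal_degs M). hook_factor d (size (internal_degs M)) * hook_sum (M - {#d#}))"
    unfolding hook_sum_def sum_distrib_left
  proof (intro sum.cong refl)
    fix d ts assume d: "d \<in> set_mset (internal_degs M)" and ts: "ts \<in> forests_with_degs (M - {#d#})"
    have "d \<noteq> 0" "d \<in># M"
      using d by (auto simp: internal_degs_def)
    moreover have "length ts = d"
      using length_ts d ts by simp
    ultimately have "ts \<noteq> []" "mset (degs (Node ts)) = M"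
      using ts by (auto simp: forests_with_degs_def forest_degs_def)
    with \<open>length ts = d\<close> show "forest_weight [Node ts] = hook_factor d (size (internal_degs M)) * forest_weight ts"
      by (simp add: tree_weight_Node del: degs.simps tree_weight.simps)
  qed
  finally show ?thesis .
qed

lemma hook_sum_forest_rec:
  assumes ell: "2 \<le> ell_mset M"
  shows "hook_sum M = (\<Sum>s | s \<subseteq># M \<and> ell_mset s = 1. hook_sum s * hook_sum (M - s))"
proof -
  define S where "S = {s. s \<subseteq># M \<and> ell_mset s = 1}"
  have "finite S"
    unfolding S_def by (rule finite_subset[OF _ finite_submultisets[of M]]) auto
  have "(\<Sum>s\<in>S. hook_sum s * hook_sum (M - s))
      = (\<Sum>s\<in>S. \<Sum>(G, H)\<in>forests_with_degs s \<times> forests_with_degs (M - s). forest_weight G * forest_weight H)"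
    unfolding hook_sum_def by (simp add: sum_product sum.cartesian_product)
  also have "\<dots> = (\<Sum>(s, G, H)\<in>Sigma S (\<lambda>s. forests_with_degs s \<times> forests_with_degs (M - s)).
                    forest_weight G * forest_weight H)"
    using \<open>finite S\<close> by (subst sum.Sigma) (auto simp: finite_forests_with_degs)
  also have "\<dots> = hook_sum M"
    unfolding hook_sum_def
  proof (rule sum.reindex_bij_witness[where j = "\<lambda>(s, G, H). G @ H"
        and i = "\<lambda>F. (mset (degs (hd F)), [hd F], tl F)"])
    fix x assume "x \<in> Sigma S (\<lambda>s. forests_with_degs s \<times> forests_with_degs (M - s))"
    then obtain s G H where x: "x = (s, G, H)" and s: "s \<subseteq># M" "ell_mset s = 1"
      and G: "G \<in> forests_with_degs s" and H: "H \<in> forests_with_degs (M - s)"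
      by (auto simp: S_def)
    have "length G = 1"
      using length_forests_with_degs[OF G] s by simp
    then obtain t where "G = [t]"
      by (metis One_nat_def length_0_conv length_Suc_conv)
    with x G show "(\<lambda>F. (mset (degs (hd F)), [hd F], tl F)) ((\<lambda>(s, G, H). G @ H) x) = x"
      by (simp add: forests_with_degs_def)
    have "mset (forest_degs (G @ H)) = M"
      using G H s by (simp add: forests_with_degs_def forest_degs_def)
    with x show "(\<lambda>(s, G, H). G @ H) x \<in> forests_with_degs M"
      by (simp add: forests_with_degs_def)
    show "forest_weight ((\<lambda>(s, G, H). G @ H) x) = (\<lambda>(s, G, H). forest_weight G * forest_weight H) x"
      using x by (simp add: forest_weight_def)
  next
    fix F assume F: "F \<in> forests_with_degs M"
    then have "2 \<le> length F"
      using length_forests_with_degs ell by fastforce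
    then obtain t H where F_eq: "F = t # H"
      by (cases F) auto
    then have M: "M = mset (degs t) + mset (forest_degs H)"
      using F by (simp add: forests_with_degs_def)
    show "(\<lambda>(s, G, H). G @ H) ((\<lambda>F. (mset (degs (hd F)), [hd F], tl F)) F) = F"
      using F_eq by simp
    show "(\<lambda>F. (mset (degs (hd F)), [hd F], tl F)) F \<in> Sigma S (\<lambda>s. forests_with_degs s \<times> forests_with_degs (M - s))"
      using F_eq M by (simp add: S_def forests_with_degs_def ell_mset_degs)
  qed
  finally show ?thesis
    unfolding S_def ..
qed

lemma hook_sum_leaf: "hook_sum {#0#} = 1"
proof -
  have "forests_with_degs {#0#} = {[Node []]}"
  proof (intro equalityI subsetI)
    fix F assume F: "F \<in> forests_with_degs {#0#}"
    then have "length F = 1"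
      using length_forests_with_degs by fastforce
    then obtain ts where F_eq: "F = [Node ts]"
      by (metis One_nat_def length_0_conv length_Suc_conv ptree.exhaust)
    then have "add_mset (length ts) (mset (forest_degs ts)) = {#0#}"
      using F by (simp add: forests_with_degs_def forest_degs_def)
    then show "F \<in> {[Node []]}"
      using F_eq by (simp add: add_mset_eq_single)
  qed (simp add: forests_with_degs_def forest_degs_def)
  then show ?thesis
    by (simp add: hook_sum_def)
qed

lemma hook_sum_eq_closed_form: "1 \<le> ell_mset M \<Longrightarrow> hook_sum M = closed_form M"
proof (induction "size M" arbitrary: M rule: less_induct)
  case less
  consider "ell_mset M = 1" "internal_degs M = {#}" | "ell_mset M = 1" "internal_degs M \<noteq> {#}"
    | "2 \<le> ell_mset M"
    using less.prems by fastforce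
  then show ?case
  proof cases
    case 1
    then have "count M 0 = 1"
      using count_0_eq_ell_mset[of M] by simp
    with 1 have "M = {#0#}"
      using internal_degs_add_zeros[of M] by simp
    then show ?thesis
      by (simp add: hook_sum_leaf closed_form_leaf)
  next
    case 2
    have "hook_sum (M - {#d#}) = closed_form (M - {#d#})" if "d \<in># internal_degs M" for d
    proof (rule less.hyps)
      have "d \<in># M" "d \<noteq> 0"
        using that by (auto simp: internal_degs_def)
      then show "size (M - {#d#}) < size M" "1 \<le> ell_mset (M - {#d#})"
        using 2 by (simp_all add: ell_mset_diff size_Diff1_less)
    qed
    then show ?thesis
      using 2 by (simp add: hook_sum_tree_rec closed_form_tree_rec[symmetric])
  next
    case 3
    have "hook_sum s * hook_sum (M - s) = closed_form s * closed_form (M - s)"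
      if "s \<subseteq># M" "ell_mset s = 1" for s
    proof -
      have ell_rest: "ell_mset (M - s) = ell_mset M - 1"
        using that by (simp add: ell_mset_diff)
      then have "s \<noteq> {#}" "M - s \<noteq> {#}"
        using that 3 by auto
      moreover have "size M = size s + size (M - s)"
        using that by (metis size_union subset_mset.add_diff_inverse)
      ultimately have "size s < size M" "size (M - s) < size M"
        by (simp_all add: nonempty_has_size)
      then show ?thesis
        using less.hyps[of s] less.hyps[of "M - s"] that ell_rest 3 by simp
    qed
    then show ?thesis
      using 3 by (simp add: hook_sum_forest_rec closed_form_convolution[symmetric])
  qed
qed

lemma forests_of_type_count: "forests_of_type (count M) = forests_with_degs M"
proof -
  have "num_deg F i = count (mset (forest_degs F)) i" for F i
  proof -
    have "(\<lambda>d. d = i) = (=) i" by auto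
    then show ?thesis
      by (simp add: num_deg_def count_mset count_list_eq_length_filter)
  qed
  then show ?thesis
    by (simp add: forests_of_type_def forests_with_degs_def multiset_eq_iff)
qed

theorem theorem2p3:
  fixes r :: "nat \<Rightarrow> nat"
  assumes fin: "finite {d. r d \<noteq> 0}"
    and ell: "ell_of r \<ge> 1"
  shows "(\<Sum>F\<in>forests_of_type r. forest_weight F) =
         smult (real_of_int (ell_of r) / real (r 0)
                  / (\<Prod>d\<in>{d. 1 \<le> d \<and> r d \<noteq> 0}. real (fact (r d))))
               (\<Prod>k<n_of r. [: - real k, real (r 0) :])"
proof -
  define M where "M = Abs_multiset r"
  have "{x. 0 < r x} = {d. r d \<noteq> 0}"
    by auto
  then have r: "r = count M"
    using fin unfolding M_def by (simp add: count_Abs_multiset)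
  have "1 \<le> ell_mset M"
    using ell by (simp add: r ell_of_count)
  then have "hook_sum M = closed_form M"
    by (rule hook_sum_eq_closed_form)
  then show ?thesis
    unfolding r forests_of_type_count hook_sum_def closed_form_def .
qed

end
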